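(* Let $n\geq1$, $1\leq k\leq n$, and let $\eta_k=(z_k,d_{k,0},\ldots,d_{k,r})$ be as constructed below; write $v_i=v_{i,\eta_k}$ and $r_i=r_{i,\eta_k}$. Then: (1) $d_{k,l}>0$ for all $l\in\{1,\ldots,r\}$; in particular $\eta_k\in\Omega$. (2) For $i\in\{1,\ldots,n\}$, let $l\in\{1,\ldots,r\}$ be the unique index with $\sum_{j=0}^{l-1}d_{k,j}<i\leq\sum_{j=1}^ld_{k,j}$. Then $f_k(v_i)+r_i\leq f_k\big((\sum_{j\text{ even},j\leq l}d_{k,j}+1)(n,n+1)\big)$ if $z_k=1$, $l$ odd; $f_k(v_i)+r_i\leq f_k\big((\sum_{j\text{ odd},j\leq l}d_{k,j}+1)(1,0)\big)$ if $z_k=1$, $l$ even; $f_k(v_i)+r_i\leq f_k\big((\sum_{j\text{ even},j\leq l}d_{k,j}+1)(1,0)\big)$ if $z_k=0$, $l$ odd; $f_k(v_i)+r_i\leq f_k\big((\sum_{j\text{ odd},j\leq l}d_{k,j}+1)(n,n+1)\big)$ if $z_k=0$, $l$ even. (3) If $i,i'$ are positive integers with $\sum_{j=0}^{l-1}d_{k,j}<i<i'\leq\sum_{j=0}^ld_{k,j}$ for some $l\in\{1,\ldots,r\}$, then $f_k(v_i)+r_i\leq f_k(v_{i'})+r_{i'}$. (4) For all $1\leq i<i'\leq n$, $f_k(v_i+r_i(1,1))\leq f_k(v_{i'}+r_{i'}(1,1))$. (5) If $l>2$ and $f_k(v_l+r_l(1,1))=f_k(v_{l-1}+r_{l-1}(1,1))$,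 then $f_k(v_l+r_l(1,1))\geq f_k(v_{l-2}+r_{l-2}(1,1))+2$.
   Context: $f_k(v)=kv_1+(1-k)v_2$ for $v\in\mathbb N^2$ (so $f_k((1,0))=k$, $f_k((n,n+1))=n+1-k$). $\Omega$ is the set of $\eta=(z,d_0,\ldots,d_r)$ with $z\in\{0,1\}$, $d_0=0$, $d_i\geq1$ ($1\leq i\leq r$), $\sum d_i=n$. For $j\in\{1,\ldots,n\}$, $t$ is unique with $\sum_{i<t}d_i<j\leq\sum_{i\leq t}d_i$, $c=j-\sum_{i<t}d_i$; $v_{j,\eta}=(\sum_{i\text{ odd},i<t}d_i+c,0)$ if $z=1,t$ odd; $(0,\sum_{i\text{ even},i<t}d_i+c)$ if $z=1,t$ even; $(0,\sum_{i\text{ odd},i<t}d_i+c)$ if $z=0,t$ odd; $(\sum_{i\text{ even},i<t}d_i+c,0)$ if $z=0,t$ even; $r_{j,\eta}=n\cdot\pi_2(v_{j,\eta})$. Construction of $\eta_k$: $z_k=1$ if $k\leq n+1-k$, else $z_k=0$; $d_{k,0}=0$; for $l\geq1$ with $O_l=\sum_{j\text{ odd},j\leq l-1}d_{k,j}$, $E_l=\sum_{j\text{ even},j\leq l-1}d_{k,j}$: $t_l=\max\{m\in\mathbb N:mk\leq(E_l+1)(n+1-k)\}$ ($z_k=1$, $l$ odd), $\max\{m:m(n+1-k)\leq(O_l+1)k\}$ ($z_k=1$, $l$ even), $\max\{m:m(n+1-k)\leq(E_l+1)k\}$ ($z_k=0$, $l$ odd), $\max\{m:mk\leq(O_l+1)(n+1-k)\}$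 ($z_k=0$, $l$ even); $s_1=0$, $s_l=O_l$ for odd $l>1$, $s_l=E_l$ for even $l$; $d_{k,l}=\min\{n-\sum_{j=0}^{l-1}d_{k,j},t_l-s_l\}$; the process stops at the first $r$ with $\sum_{j=1}^rd_{k,j}=n$. *)

theory Defs
  imports Main
begin

definition fk :: "nat \<Rightarrow> int \<times> int \<Rightarrow> int" where
  "fk k v = int k * fst v + (1 - int k) * snd v"

definition smul :: "int \<Rightarrow> int \<times> int \<Rightarrow> int \<times> int" where
  "smul c v = (c * fst v, c * snd v)"

definition vadd :: "int \<times> int \<Rightarrow> int \<times> int \<Rightarrow> int \<times> int" where
  "vadd v w = (fst v + fst w, snd v + snd w)"

text \<open>An element eta = (z, d_0, ..., d_r) is represented as a pair (z, [d_0, ..., d_r]).\<close>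
type_synonym eta = "nat \<times> int list"

definition psum :: "int list \<Rightarrow> nat \<Rightarrow> int" where
  "psum ds m = (\<Sum>i<m. ds ! i)"

definition Omega :: "nat \<Rightarrow> eta set" where
  "Omega n = {(z, ds). z \<in> {0, 1} \<and> ds \<noteq> [] \<and> ds ! 0 = 0 \<and>
      (\<forall>i\<in>{1..<length ds}. ds ! i \<ge> 1) \<and> psum ds (length ds) = int n}"

definition tidx :: "eta \<Rightarrow> nat \<Rightarrow> nat" where
  "tidx e j = (THE t. t < length (snd e) \<and> psum (snd e) t < int j \<and> int j \<le> psum (snd e) (Suc t))"

definition vvec :: "eta \<Rightarrow> nat \<Rightarrow> int \<times> int" where
  "vvec e j = (let z = fst e; ds = snd e; t = tidx e j;
                   c = int j - psum ds t;
                   Od = (\<Sum>i\<in>{i. i < t \<and> odd i}. ds ! i);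
                   Ev = (\<Sum>i\<in>{i. i < t \<and> even i}. ds ! i)
               in if z = 1 \<and> odd t then (Od + c, 0)
                  else if z = 1 \<and> even t then (0, Ev + c)
                  else if z = 0 \<and> odd t then (0, Od + c)
                  else (Ev + c, 0))"

definition rvec :: "nat \<Rightarrow> eta \<Rightarrow> nat \<Rightarrow> int" where
  "rvec n e j = int n * snd (vvec e j)"

definition zk :: "nat \<Rightarrow> nat \<Rightarrow> nat" where
  "zk n k = (if int k \<le> int n + 1 - int k then 1 else 0)"

text \<open>Given the already constructed d_0, ..., d_(l-1) (the list ds, length l), compute d_l, l >= 1.\<close>
definition next_d :: "nat \<Rightarrow> nat \<Rightarrow> int list \<Rightarrow> nat \<Rightarrow> int" where
  "next_d n k ds l = (let N = int n; K = int k; z = zk n k;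
       Os = (\<Sum>j\<in>{j. j \<le> l - 1 \<and> odd j}. ds ! j);
       Es = (\<Sum>j\<in>{j. j \<le> l - 1 \<and> even j}. ds ! j);
       t = (if z = 1 \<and> odd l then (GREATEST m::nat. int m * K \<le> (Es + 1) * (N + 1 - K))
            else if z = 1 \<and> even l then (GREATEST m::nat. int m * (N + 1 - K) \<le> (Os + 1) * K)
            else if z = 0 \<and> odd l then (GREATEST m::nat. int m * (N + 1 - K) \<le> (Es + 1) * K)
            else (GREATEST m::nat. int m * K \<le> (Os + 1) * (N + 1 - K)));
       s = (if l = 1 then 0 else if odd l then Os else Es)
     in min (N - (\<Sum>j<l. ds ! j)) (int t - s))"

fun dlist :: "nat \<Rightarrow> nat \<Rightarrow> nat \<Rightarrow> int list" where
  "dlist n k 0 = [0]"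
| "dlist n k (Suc l) = (let ds = dlist n k l in ds @ [next_d n k ds (Suc l)])"

definition dk :: "nat \<Rightarrow> nat \<Rightarrow> nat \<Rightarrow> int" where
  "dk n k l = dlist n k l ! l"

definition rk :: "nat \<Rightarrow> nat \<Rightarrow> nat" where
  "rk n k = (LEAST r. (\<Sum>j=1..r. dk n k j) = int n)"

definition etak :: "nat \<Rightarrow> nat \<Rightarrow> eta" where
  "etak n k = (zk n k, map (dk n k) [0..<Suc (rk n k)])"

end

theory Submission
  imports Defs
begin

text \<open>
  Block l consists of the indices i with d_0 + ... + d_(l-1) < i \<le> d_0 + ... + d_l. Write a_l
  (same_sum) and b_l (opp_sum) for the sums of the d_j, j < l, of the same and of the opposite
  parity as l, and p \<le> q for min(k, n+1-k) and max(k, n+1-k). In all four cases of the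
  construction, block l moves the coordinate a_l: inside it f_k(v_i) + r_i equals
  rate_l (a_l + c), where the rate is p on odd and q on even blocks and the corate is the other
  one, and t_l is the largest t with t rate_l \<le> (b_l + 1) corate_l. This choice preserves
  (a_l + 1) rate_l \<le> (b_l + 1) corate_l, which forces d_l \<ge> 1, and makes the first value of
  block l+1 equal to (b_l + 1) corate_l, an upper bound for the values in block l. Monotonicity
  follows, and a plateau can only occur at a block boundary, where the next step up is a
  multiple of p \<ge> 2.
\<close>

lemma Greatest_mult_le_int:
  fixes c B :: int
  assumes "0 < c" and "0 \<le> B"
  shows "int (GREATEST m. int m * c \<le> B) * c \<le> B"
    and "B < (int (GREATEST m. int m * c \<le> B) + 1) * c"
proof -
  have "B div c * c + B mod c = B" and "0 \<le> B mod c" and "B mod c < c"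
    using assms(1) by simp_all
  then have le: "B div c * c \<le> B" and less: "B < (B div c + 1) * c"
    unfolding distrib_right by linarith+
  have "int (nat (B div c)) = B div c"
    using assms by (simp add: pos_imp_zdiv_nonneg_iff)
  moreover have "(GREATEST m. int m * c \<le> B) = nat (B div c)"
  proof (rule Greatest_equality)
    show "int (nat (B div c)) * c \<le> B"
      using le \<open>int (nat (B div c)) = B div c\<close> by simp
  next
    fix m
    assume "int m * c \<le> B"
    then have "int m * c < (B div c + 1) * c"
      using less by linarith
    then show "m \<le> nat (B div c)"
      using assms(1) by (simp add: mult_less_cancel_right)
  qed
  ultimately show "int (GREATEST m. int m * c \<le> B) * c \<le> B"
    and "B < (int (GREATEST m. int m * c \<le> B) + 1) * c"
    using le less by simp_all
qed

lemma length_dlist: "length (dlist n k l) = Suc l"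
  by (induction l) (simp_all add: Let_def)

lemma nth_dlist: "j \<le> l \<Longrightarrow> dlist n k l ! j = dk n k j"
proof (induction l)
  case 0
  then show ?case by (simp add: dk_def)
next
  case (Suc l)
  then show ?case
    by (cases "j = Suc l") (simp_all add: dk_def Let_def nth_append length_dlist)
qed

lemma dk_0: "dk n k 0 = 0"
  by (simp add: dk_def)

lemma dk_Suc: "dk n k (Suc l) = next_d n k (dlist n k l) (Suc l)"
  by (simp add: dk_def nth_append length_dlist Let_def)

lemma fk_smul: "fk k (smul c v) = c * fk k v"
  by (simp add: fk_def smul_def algebra_simps)

lemma fk_unit_vectors: "fk k (1, 0) = int k" "fk k (int n, int n + 1) = int n + 1 - int k"
  by (simp_all add: fk_def algebra_simps)

lemma fk_vadd_diagonal: "fk k (vadd v (smul c (1, 1))) = fk k v + c"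
  by (simp add: fk_def smul_def vadd_def algebra_simps)

locale eta_construction =
  fixes n k :: nat
  assumes k_pos: "1 \<le> k" and k_le_n: "k \<le> n"
begin

abbreviation D :: "nat \<Rightarrow> int" where "D \<equiv> dk n k"

definition p :: int where "p = min (int k) (int n + 1 - int k)"
definition q :: int where "q = max (int k) (int n + 1 - int k)"

lemma one_le_p: "1 \<le> p" and p_le_q: "p \<le> q"
  using k_pos k_le_n by (auto simp: p_def q_def)

lemma p_plus_q: "p + q = int n + 1"
  by (simp add: p_def q_def)

lemma p_q_zk:
  "p = (if zk n k = 1 then int k else int n + 1 - int k)"
  "q = (if zk n k = 1 then int n + 1 - int k else int k)"
  by (auto simp: p_def q_def zk_def)

definition dsum :: "nat \<Rightarrow> int" where "dsum m = (\<Sum>j<m. D j)"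

definition same_sum :: "nat \<Rightarrow> int" where
  "same_sum l = (\<Sum>j | j < l \<and> odd j = odd l. D j)"

definition opp_sum :: "nat \<Rightarrow> int" where
  "opp_sum l = (\<Sum>j | j < l \<and> odd j \<noteq> odd l. D j)"

definition rate :: "nat \<Rightarrow> int" where "rate l = (if odd l then p else q)"
definition corate :: "nat \<Rightarrow> int" where "corate l = (if odd l then q else p)"

definition bound :: "nat \<Rightarrow> int" where "bound l = (opp_sum l + 1) * corate l"

definition T :: "nat \<Rightarrow> nat" where "T l = (GREATEST m. int m * rate l \<le> bound l)"

lemma dsum_0: "dsum 0 = 0" and dsum_1: "dsum (Suc 0) = 0"
  by (simp_all add: dsum_def dk_0)

lemma dsum_Suc: "dsum (Suc m) = dsum m + D m"
  by (simp add: dsum_def)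

lemma same_sum_Suc: "same_sum (Suc l) = opp_sum l"
proof -
  have "{j. j < Suc l \<and> odd j = odd (Suc l)} = {j. j < l \<and> odd j \<noteq> odd l}"
    by (auto simp: less_Suc_eq)
  then show ?thesis by (simp add: same_sum_def opp_sum_def)
qed

lemma opp_sum_Suc: "opp_sum (Suc l) = same_sum l + D l"
proof -
  have "{j. j < Suc l \<and> odd j \<noteq> odd (Suc l)} = insert l {j. j < l \<and> odd j = odd l}"
    by (auto simp: less_Suc_eq)
  then show ?thesis by (simp add: same_sum_def opp_sum_def)
qed

lemma same_sum_0: "same_sum 0 = 0" and opp_sum_0: "opp_sum 0 = 0"
  by (simp_all add: same_sum_def opp_sum_def)

lemma same_sum_1: "same_sum (Suc 0) = 0" and opp_sum_1: "opp_sum (Suc 0) = 0"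
  by (simp_all add: same_sum_Suc opp_sum_Suc same_sum_0 opp_sum_0 dk_0)

lemma rate_Suc: "rate (Suc l) = corate l" and corate_Suc: "corate (Suc l) = rate l"
  by (simp_all add: rate_def corate_def)

lemma p_le_rate: "p \<le> rate l" and p_le_corate: "p \<le> corate l"
  using p_le_q by (simp_all add: rate_def corate_def)

lemma rate_pos: "0 < rate l" and corate_pos: "0 < corate l"
  using one_le_p p_le_q by (simp_all add: rate_def corate_def)

lemma sum_parity_less:
  "(\<Sum>j | j < l \<and> odd j. D j) = (if odd l then same_sum l else opp_sum l)"
  "(\<Sum>j | j < l \<and> even j. D j) = (if odd l then opp_sum l else same_sum l)"
  by (simp_all add: same_sum_def opp_sum_def)

text \<open>
  The four cases of next_d collapse: rate, corate and the two parity sums absorb the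
  dependence on z_k and on the parity of l, and s_l is same_sum l (both vanish at l = 1).
\<close>

lemma D_eq:
  assumes "1 \<le> l"
  shows "D l = min (int n - dsum l) (int (T l) - same_sum l)"
proof -
  obtain m where l: "l = Suc m" using assms by (cases l) auto
  have "dlist n k m ! j = D j" if "j < Suc m" for j
    using that by (simp add: nth_dlist)
  then have sums:
      "(\<Sum>j\<in>{j. j \<le> Suc m - 1 \<and> P j}. dlist n k m ! j) = (\<Sum>j | j < Suc m \<and> P j. D j)"
      "(\<Sum>j<Suc m. dlist n k m ! j) = dsum (Suc m)" for P
    unfolding dsum_def by (auto intro: sum.cong)
  show ?thesis
    using same_sum_1 unfolding l dk_Suc next_d_def Let_def sums sum_parity_less
    by (auto simp: T_def bound_def rate_def corate_def p_q_zk zk_def)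
qed

lemma T_bounds:
  assumes "0 \<le> opp_sum l"
  shows "int (T l) * rate l \<le> bound l" and "bound l < (int (T l) + 1) * rate l"
  using Greatest_mult_le_int[OF rate_pos, of "bound l" l] assms corate_pos[of l]
  by (simp_all add: T_def bound_def)

lemma dsum_le_n: "dsum l \<le> int n"
proof (cases "l \<le> 1")
  case True
  then have "l = 0 \<or> l = 1" by auto
  then show ?thesis using dsum_0 dsum_1 by auto
next
  case False
  then obtain m where "l = Suc m" and "1 \<le> m" by (cases l) auto
  then show ?thesis using D_eq[of m] by (simp add: dsum_Suc)
qed

definition admissible :: "nat \<Rightarrow> bool" where
  "admissible l \<longleftrightarrow>
    0 \<le> same_sum l \<and> 0 \<le> opp_sum l \<and> (same_sum l + 1) * rate l \<le> bound l"

lemma admissible_1: "admissible 1"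
  using p_le_q by (simp add: admissible_def bound_def rate_def corate_def same_sum_1 opp_sum_1)

lemma same_sum_less_T:
  assumes "admissible l"
  shows "same_sum l < int (T l)"
proof -
  have "(same_sum l + 1) * rate l < (int (T l) + 1) * rate l"
    using assms T_bounds(2)[of l] by (simp add: admissible_def)
  then show ?thesis using rate_pos[of l] by (simp add: mult_less_cancel_right)
qed

lemma D_pos:
  assumes "1 \<le> l" and "admissible l" and "dsum l < int n"
  shows "1 \<le> D l"
  using D_eq[OF assms(1)] same_sum_less_T[OF assms(2)] assms(3) by simp

lemma admissible_Suc:
  assumes "1 \<le> l" and inv: "admissible l" and less_n: "dsum (Suc l) < int n"
  shows "admissible (Suc l)"
proof -
  have D: "D l = int (T l) - same_sum l"
    using D_eq[OF assms(1)] less_n by (auto simp: dsum_Suc min_def split: if_splits)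
  have opp: "opp_sum (Suc l) = int (T l)"
    by (simp add: opp_sum_Suc D)
  have "(same_sum (Suc l) + 1) * rate (Suc l) = bound l"
    by (simp add: same_sum_Suc rate_Suc bound_def)
  also have "\<dots> < (int (T l) + 1) * rate l"
    using inv T_bounds(2) by (simp add: admissible_def)
  also have "\<dots> = bound (Suc l)"
    by (simp add: bound_def opp corate_Suc)
  finally show ?thesis
    using inv same_sum_less_T[OF inv] by (simp add: admissible_def same_sum_Suc opp)
qed

lemma admissible_while_below_n:
  assumes "1 \<le> l" and "\<forall>m\<le>l. dsum m < int n"
  shows "admissible l \<and> int l - 1 \<le> dsum l"
  using assms
proof (induction l rule: nat_induct_at_least)
  case base
  show ?case using admissible_1 dsum_1 by simp
next
  case (Suc l)
  then have inv: "admissible l" and "int l - 1 \<le> dsum l" and "dsum l < int n"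
    by simp_all
  moreover have "1 \<le> D l"
    using D_pos[OF Suc.hyps inv] \<open>dsum l < int n\<close> .
  moreover have "dsum (Suc l) < int n"
    using Suc.prems by simp
  ultimately show ?case
    using admissible_Suc[OF Suc.hyps inv] by (simp add: dsum_Suc)
qed

lemma sum_dk_eq_dsum: "(\<Sum>j=1..r. D j) = dsum (Suc r)"
  by (induction r) (simp_all add: dsum_Suc dsum_0 dk_0)

lemma rk_stops:
  shows "1 \<le> rk n k" and "dsum (Suc (rk n k)) = int n" and "\<forall>m\<le>rk n k. dsum m < int n"
proof -
  have "\<exists>m. int n \<le> dsum m"
  proof (rule ccontr)
    assume "\<not> (\<exists>m. int n \<le> dsum m)"
    then have "\<forall>m\<le>Suc n. dsum m < int n"
      by (simp add: not_le)
    then have "int (Suc n) - 1 \<le> dsum (Suc n)" and "dsum (Suc n) < int n"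
      using admissible_while_below_n[of "Suc n"] by auto
    then show False by simp
  qed
  define m0 where "m0 = (LEAST m. int n \<le> dsum m)"
  have reached: "int n \<le> dsum m0"
    unfolding m0_def using \<open>\<exists>m. int n \<le> dsum m\<close> by (rule LeastI_ex)
  have below: "dsum m < int n" if "m < m0" for m
    using that not_less_Least unfolding m0_def by force
  have "1 < m0"
  proof (rule ccontr)
    assume "\<not> 1 < m0"
    then have "dsum m0 = 0"
      using dsum_0 dsum_1 by (cases m0) auto
    then show False
      using reached k_pos k_le_n by simp
  qed
  then obtain r where m0: "m0 = Suc r" and r: "1 \<le> r"
    by (cases m0) auto
  have r_eq: "dsum (Suc r) = int n"
    using reached dsum_le_n[of "Suc r"] m0 by simp
  have "rk n k = r"
    unfolding rk_def
  proof (rule Least_equality)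
    show "(\<Sum>j=1..r. D j) = int n"
      unfolding sum_dk_eq_dsum by (rule r_eq)
  next
    fix y
    assume "(\<Sum>j=1..y. D j) = int n"
    then have "dsum (Suc y) = int n"
      unfolding sum_dk_eq_dsum .
    then show "r \<le> y"
      using below[of "Suc y"] m0 by force
  qed
  then show "1 \<le> rk n k" and "dsum (Suc (rk n k)) = int n" and "\<forall>m\<le>rk n k. dsum m < int n"
    using r r_eq below m0 by auto
qed

lemma admissible_block: "1 \<le> l \<Longrightarrow> l \<le> rk n k \<Longrightarrow> admissible l"
  using admissible_while_below_n rk_stops(3) by auto

lemma D_pos_block: "1 \<le> l \<Longrightarrow> l \<le> rk n k \<Longrightarrow> 1 \<le> D l"
  using D_pos admissible_block rk_stops(3) by auto

lemma D_nonneg_block: "l \<le> rk n k \<Longrightarrow> 0 \<le> D l"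
  using D_pos_block[of l] by (cases l) (simp_all add: dk_0)

lemma dsum_mono:
  assumes "a \<le> b" and "b \<le> Suc (rk n k)"
  shows "dsum a \<le> dsum b"
  using assms
proof (induction b rule: dec_induct)
  case (step m)
  then show ?case using D_nonneg_block[of m] by (simp add: dsum_Suc)
qed simp

definition in_block :: "nat \<Rightarrow> nat \<Rightarrow> bool" where
  "in_block l i \<longleftrightarrow> 1 \<le> l \<and> l \<le> rk n k \<and> dsum l < int i \<and> int i \<le> dsum (Suc l)"

lemma block_index_unique:
  assumes "l \<le> rk n k" "dsum l < int i" "int i \<le> dsum (Suc l)"
    and "l' \<le> rk n k" "dsum l' < int i" "int i \<le> dsum (Suc l')"
  shows "l = l'"
proof -
  have "\<not> a < b" if "b \<le> rk n k" "dsum b < int i" "int i \<le> dsum (Suc a)" for a b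
    using that dsum_mono[of "Suc a" b] by auto
  then show ?thesis
    using assms by (meson linorder_neqE_nat)
qed

lemma in_block_unique: "in_block l i \<Longrightarrow> in_block l' i \<Longrightarrow> l = l'"
  using block_index_unique[of l i l'] by (simp add: in_block_def)

lemma in_block_exists:
  assumes "1 \<le> i" and "i \<le> n"
  obtains l where "in_block l i"
proof -
  define m0 where "m0 = (LEAST m. int i \<le> dsum m)"
  have "int i \<le> dsum (Suc (rk n k))"
    using rk_stops(2) assms by simp
  then have reached: "int i \<le> dsum m0" and "m0 \<le> Suc (rk n k)"
    unfolding m0_def by (auto intro: LeastI Least_le)
  have below: "dsum m < int i" if "m < m0" for m
    using that not_less_Least unfolding m0_def by force
  have "1 < m0"
  proof (rule ccontr)
    assume "\<not> 1 < m0"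
    then have "dsum m0 = 0"
      using dsum_0 dsum_1 by (cases m0) auto
    then show False
      using reached assms by simp
  qed
  then obtain l where "m0 = Suc l" and "1 \<le> l"
    by (cases m0) auto
  then have "in_block l i"
    using reached below[of l] \<open>m0 \<le> Suc (rk n k)\<close> by (simp add: in_block_def)
  then show ?thesis ..
qed

lemma etak_eq: "etak n k = (zk n k, map D [0..<Suc (rk n k)])"
  by (simp add: etak_def)

lemma psum_etak: "t \<le> Suc (rk n k) \<Longrightarrow> psum (map D [0..<Suc (rk n k)]) t = dsum t"
  unfolding psum_def dsum_def by (intro sum.cong) (auto simp del: upt_Suc)

lemma tidx_etak:
  assumes "in_block l i"
  shows "tidx (etak n k) i = l"
  unfolding tidx_def etak_eq snd_conv
proof (rule the_equality)
  show "l < length (map D [0..<Suc (rk n k)]) \<and> psum (map D [0..<Suc (rk n k)]) l < int i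
      \<and> int i \<le> psum (map D [0..<Suc (rk n k)]) (Suc l)"
    using assms by (simp add: in_block_def psum_etak del: upt_Suc)
next
  fix t
  assume t: "t < length (map D [0..<Suc (rk n k)]) \<and> psum (map D [0..<Suc (rk n k)]) t < int i
      \<and> int i \<le> psum (map D [0..<Suc (rk n k)]) (Suc t)"
  then have "t \<le> rk n k"
    by simp
  then have "dsum t < int i" and "int i \<le> dsum (Suc t)"
    using t psum_etak[of t] psum_etak[of "Suc t"] by (simp_all del: upt_Suc)
  then show "t = l"
    using assms block_index_unique[of t i l] \<open>t \<le> rk n k\<close>
    by (simp add: in_block_def)
qed

definition F :: "nat \<Rightarrow> int" where
  "F i = fk k (vvec (etak n k) i) + rvec n (etak n k) i"

lemma F_in_block:
  assumes "in_block l i"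
  shows "F i = rate l * (same_sum l + (int i - dsum l))"
proof -
  have "l \<le> rk n k"
    using assms by (simp add: in_block_def)
  then have "(\<Sum>j | j < l \<and> P j. map D [0..<Suc (rk n k)] ! j) = (\<Sum>j | j < l \<and> P j. D j)"
    for P
    by (intro sum.cong) (auto simp del: upt_Suc)
  then have "vvec (etak n k) i =
      (if (zk n k = 1) = odd l then (same_sum l + (int i - dsum l), 0)
       else (0, same_sum l + (int i - dsum l)))"
    unfolding vvec_def Let_def tidx_etak[OF assms]
    using psum_etak[of l] \<open>l \<le> rk n k\<close>
    by (auto simp: sum_parity_less zk_def etak_eq simp del: upt_Suc)
  then show ?thesis
    by (auto simp: F_def rvec_def fk_def rate_def p_q_zk zk_def algebra_simps)
qed

lemma F_le_bound:
  assumes "in_block l i"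
  shows "F i \<le> bound l"
proof -
  have l: "1 \<le> l" "l \<le> rk n k" and i: "int i \<le> dsum l + D l"
    using assms by (simp_all add: in_block_def dsum_Suc)
  have "0 \<le> opp_sum l"
    using admissible_block[OF l] by (simp add: admissible_def)
  have "same_sum l + (int i - dsum l) \<le> int (T l)"
    using D_eq[OF l(1)] i by simp
  then have "F i \<le> rate l * int (T l)"
    using F_in_block[OF assms] rate_pos[of l] by simp
  also have "\<dots> \<le> bound l"
    using T_bounds(1)[OF \<open>0 \<le> opp_sum l\<close>] by (simp add: mult.commute)
  finally show ?thesis .
qed

lemma F_end_of_block:
  assumes "in_block l i" and "int i = dsum (Suc l)"
  shows "F i = corate (Suc l) * opp_sum (Suc l)"
  using F_in_block[OF assms(1)] assms(2) by (simp add: dsum_Suc opp_sum_Suc corate_Suc)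

lemma F_Suc:
  assumes i: "in_block l i" and "Suc i \<le> n"
  shows "in_block l (Suc i) \<and> F (Suc i) = F i + rate l
    \<or> int i = dsum (Suc l) \<and> in_block (Suc l) (Suc i) \<and> F (Suc i) = bound l"
proof (cases "int i = dsum (Suc l)")
  case False
  then have "in_block l (Suc i)"
    using i by (simp add: in_block_def)
  then show ?thesis
    using F_in_block[OF i] F_in_block[of l "Suc i"] by (simp add: algebra_simps)
next
  case True
  then have "l \<noteq> rk n k"
    using rk_stops(2) \<open>Suc i \<le> n\<close> by auto
  then have "1 \<le> D (Suc l)"
    using i D_pos_block[of "Suc l"] by (simp add: in_block_def)
  then have next_block: "in_block (Suc l) (Suc i)"
    using i True \<open>l \<noteq> rk n k\<close> by (simp add: in_block_def dsum_Suc)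
  then have "F (Suc i) = bound l"
    using F_in_block[OF next_block] True
    by (simp add: same_sum_Suc rate_Suc bound_def mult.commute)
  with True next_block show ?thesis
    by simp
qed

lemma F_mono_Suc:
  assumes "1 \<le> i" and "Suc i \<le> n"
  shows "F i \<le> F (Suc i)"
proof -
  obtain l where l: "in_block l i"
    using in_block_exists[OF assms(1)] assms(2) by (meson Suc_leD)
  have "F i \<le> bound l"
    using F_le_bound[OF l] .
  then show ?thesis
    using F_Suc[OF l assms(2)] rate_pos[of l] by auto
qed

lemma F_mono:
  assumes "1 \<le> i" and "i \<le> i'" and "i' \<le> n"
  shows "F i \<le> F i'"
  using assms(2,3)
proof (induction i' rule: dec_induct)
  case (step m)
  then show ?case
    using F_mono_Suc[of m] assms(1) by simp
qed simp

lemma two_le_p: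
  assumes "2 \<le> rk n k"
  shows "2 \<le> p"
proof (rule ccontr)
  assume "\<not> 2 \<le> p"
  then have p: "p = 1" and q: "q = int n"
    using one_le_p p_plus_q by simp_all
  have "int (T 1) = int n"
    using T_bounds[of 1] by (simp add: bound_def rate_def corate_def p q opp_sum_1)
  then have "D 1 = int n"
    using D_eq[of 1] by (simp add: dsum_1 same_sum_1)
  then have "dsum 2 = int n"
    using dsum_Suc[of 1] by (simp add: dsum_1 numeral_2_eq_2)
  then show False
    using rk_stops(3) assms by force
qed

lemma F_plateau:
  assumes "2 < l" and "l \<le> n" and plateau: "F l = F (l - 1)"
  shows "F (l - 2) + 2 \<le> F l"
proof -
  define i where "i = l - 2"
  then have l: "l = Suc (Suc i)" and "1 \<le> i"
    using assms(1) by simp_all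
  obtain L where L: "in_block L (Suc i)"
    using in_block_exists[of "Suc i"] assms(2) l by force
  then have boundary: "in_block (Suc L) l" and F_l: "F l = bound L"
    using F_Suc[OF L] plateau rate_pos[of L] assms(2) l by auto
  then have "2 \<le> p"
    using L two_le_p by (simp add: in_block_def)
  obtain L' where L': "in_block L' i"
    using in_block_exists[OF \<open>1 \<le> i\<close>] assms(2) l by force
  have "Suc i \<le> n"
    using assms(2) l by simp
  show ?thesis
    using F_Suc[OF L' \<open>Suc i \<le> n\<close>]
  proof (elim disjE conjE)
    assume "in_block L' (Suc i)" and "F (Suc i) = F i + rate L'"
    then have "L' = L"
      using in_block_unique L by blast
    then show ?thesis
      using \<open>F (Suc i) = F i + rate L'\<close> plateau l \<open>2 \<le> p\<close> p_le_rate[of L] by simp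
  next
    assume "int i = dsum (Suc L')" and "in_block (Suc L') (Suc i)"
    then have "L = Suc L'"
      using in_block_unique L by blast
    then have "F i = corate L * opp_sum L"
      using F_end_of_block[OF L'] \<open>int i = dsum (Suc L')\<close> by simp
    then show ?thesis
      using F_l \<open>2 \<le> p\<close> p_le_corate[of L] l by (simp add: bound_def algebra_simps)
  qed
qed

lemma etak_in_Omega: "etak n k \<in> Omega n"
proof -
  have "psum (map D [0..<Suc (rk n k)]) (Suc (rk n k)) = int n"
    using psum_etak rk_stops(2) by simp
  moreover have "\<forall>i\<in>{1..<Suc (rk n k)}. 1 \<le> D i"
    using D_pos_block by simp
  ultimately show ?thesis
    by (simp add: etak_eq Omega_def zk_def dk_0 del: upt_Suc)
qed

lemma opp_sum_odd: "odd l \<Longrightarrow> opp_sum l = (\<Sum>j\<in>{j. j \<le> l \<and> even j}. D j)"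
  and opp_sum_even: "even l \<Longrightarrow> opp_sum l = (\<Sum>j\<in>{j. j \<le> l \<and> odd j}. D j)"
  unfolding opp_sum_def by (auto intro!: sum.cong simp: le_less)

lemma bound_eq_fk:
  "bound l =
    fk k (smul (opp_sum l + 1) (if (zk n k = 1) = odd l then (int n, int n + 1) else (1, 0)))"
  by (simp add: bound_def corate_def p_q_zk fk_smul fk_unit_vectors)

end

theorem lemma3p7:
  fixes n k :: nat
  assumes "1 \<le> n" and "1 \<le> k" and "k \<le> n"
  defines "d \<equiv> dk n k" and "r \<equiv> rk n k" and "z \<equiv> zk n k" and "e \<equiv> etak n k"
  defines "v \<equiv> vvec (etak n k)" and "rr \<equiv> rvec n (etak n k)"
  defines "S \<equiv> (\<lambda>m. \<Sum>j<m. dk n k j)"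
  shows
   "((\<exists>r'. (\<Sum>j=1..r'. d j) = int n) \<and> (\<forall>l\<in>{1..r}. d l > 0) \<and> e \<in> Omega n)
  \<and> (\<forall>i l. 1 \<le> i \<and> i \<le> n \<and> 1 \<le> l \<and> l \<le> r \<and> S l < int i \<and> int i \<le> S (Suc l) \<longrightarrow>
        (z = 1 \<and> odd l \<longrightarrow> fk k (v i) + rr i \<le>
            fk k (smul ((\<Sum>j\<in>{j. j \<le> l \<and> even j}. d j) + 1) (int n, int n + 1)))
      \<and> (z = 1 \<and> even l \<longrightarrow> fk k (v i) + rr i \<le>
            fk k (smul ((\<Sum>j\<in>{j. j \<le> l \<and> odd j}. d j) + 1) (1, 0)))
      \<and> (z = 0 \<and> odd l \<longrightarrow> fk k (v i) + rr i \<le>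
            fk k (smul ((\<Sum>j\<in>{j. j \<le> l \<and> even j}. d j) + 1) (1, 0)))
      \<and> (z = 0 \<and> even l \<longrightarrow> fk k (v i) + rr i \<le>
            fk k (smul ((\<Sum>j\<in>{j. j \<le> l \<and> odd j}. d j) + 1) (int n, int n + 1))))
  \<and> (\<forall>i i' l. 1 \<le> i \<and> 1 \<le> l \<and> l \<le> r \<and> S l < int i \<and> i < i' \<and> int i' \<le> S (Suc l) \<longrightarrow>
        fk k (v i) + rr i \<le> fk k (v i') + rr i')
  \<and> (\<forall>i i'. 1 \<le> i \<and> i < i' \<and> i' \<le> n \<longrightarrow>
        fk k (vadd (v i) (smul (rr i) (1, 1))) \<le> fk k (vadd (v i') (smul (rr i') (1, 1))))
  \<and> (\<forall>l. 2 < l \<and> l \<le> n \<and>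
        fk k (vadd (v l) (smul (rr l) (1, 1))) = fk k (vadd (v (l - 1)) (smul (rr (l - 1)) (1, 1))) \<longrightarrow>
        fk k (vadd (v l) (smul (rr l) (1, 1))) \<ge> fk k (vadd (v (l - 2)) (smul (rr (l - 2)) (1, 1))) + 2)"
proof -
  interpret eta_construction n k
    using assms(2,3) by unfold_locales
  have F_eq: "fk k (v i) + rr i = F i" "fk k (vadd (v i) (smul (rr i) (1, 1))) = F i" for i
    by (simp_all add: assms(8,9) F_def fk_vadd_diagonal)
  have S_eq: "S = dsum"
    by (simp add: assms(10) dsum_def fun_eq_iff)
  show ?thesis
    unfolding F_eq S_eq assms(4-7)
    apply (intro conjI allI impI ballI)
    subgoal using rk_stops(2) sum_dk_eq_dsum by metis
    subgoal using D_pos_block by force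
    subgoal by (rule etak_in_Omega)
    subgoal for i l using F_le_bound[of l i] opp_sum_odd[of l] by (simp add: in_block_def bound_eq_fk)
    subgoal for i l using F_le_bound[of l i] opp_sum_even[of l] by (simp add: in_block_def bound_eq_fk)
    subgoal for i l using F_le_bound[of l i] opp_sum_odd[of l] by (simp add: in_block_def bound_eq_fk)
    subgoal for i l using F_le_bound[of l i] opp_sum_even[of l] by (simp add: in_block_def bound_eq_fk)
    subgoal for i i' l using F_mono[of i i'] dsum_le_n[of "Suc l"] by simp
    subgoal for i i' using F_mono[of i i'] by simp
    subgoal for l using F_plateau[of l] by simp
    done
qed

end
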